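(* Let $K$ be a strictly positive definite kernel on $\Omega\subset\mathbb{R}^d$, $\lambda>0$, and $X_n=\{x_1,\dots,x_n\}\subset\Omega$ pairwise distinct. Then $P_n^\lambda(x)\le\sqrt{\lambda}$ for all $x\in X_n$, and $$P_n(x)\le P_n^\lambda(x)\le Q_n^\lambda(x)\quad\text{for all }x\in\Omega\setminus X_n .$$ In particular $\sup_{x\in\Omega}P_n^\lambda(x)\le\sup_{x\in\Omega}Q_n^\lambda(x)$.
   Context: $\mathcal{H}$ is the native space (reproducing kernel Hilbert space) of $K$ on $\Omega$. Let $\delta(x,y)=1$ if $x=y$ and $0$ otherwise, $K_\lambda(x,y):=K(x,y)+\lambda\delta(x,y)$, and $\mathcal{H}_\lambda$ the native space of $K_\lambda$. Let $A=(K(x_i,x_j))_{i,j=1}^n$. For $\mu\ge0$ and $f:\Omega\to\mathbb{R}$, $s_n^\mu(f):=\sum_j\alpha_jK(\cdot,x_j)$ with $(A+\mu I)\alpha=(f(x_i))_{i=1}^n$, and $I_n^\lambda(f):=\sum_j\alpha_jK_\lambda(\cdot,x_j)$ with $(A+\lambda I)\alpha=(f(x_i))_i$ (the interpolant of $f$ in $\mathcal{H}_\lambda$). Power functions: $P_n^\lambda(x):=\sup_{f\in\mathcal{H},f\ne0}|f(x)-s_n^\lambda(f)(x)|/\|f\|_{\mathcal{H}}$, $P_n:=P_n^0$ (power function of interpolation), and $Q_n^\lambda(x):=\sup_{f\in\mathcal{H}_\lambda,f\ne0}|f(x)-I_n^\lambda(f)(x)|/\|f\|_{\mathcal{H}_\lambda}$.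 *)

theory Defs
  imports "HOL-Analysis.Analysis"
begin

definition strictly_pd_kernel :: "('a \<Rightarrow> 'a \<Rightarrow> real) \<Rightarrow> 'a set \<Rightarrow> bool" where
  "strictly_pd_kernel K \<Omega> \<longleftrightarrow>
     (\<forall>x\<in>\<Omega>. \<forall>y\<in>\<Omega>. K x y = K y x) \<and>
     (\<forall>Y c. finite Y \<and> Y \<subseteq> \<Omega> \<and> (\<exists>y\<in>Y. c y \<noteq> 0) \<longrightarrow>
        (\<Sum>y\<in>Y. \<Sum>z\<in>Y. c y * c z * K y z) > 0)"

definition delta_kernel :: "('a \<Rightarrow> 'a \<Rightarrow> real) \<Rightarrow> real \<Rightarrow> 'a \<Rightarrow> 'a \<Rightarrow> real" where
  "delta_kernel K lam x y = K x y + lam * (if x = y then 1 else 0)"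

definition kfun :: "('a \<Rightarrow> 'a \<Rightarrow> real) \<Rightarrow> 'a set \<Rightarrow> 'a \<Rightarrow> 'a \<Rightarrow> real" where
  "kfun K \<Omega> x = (\<lambda>y. if y \<in> \<Omega> then K y x else 0)"

definition hnorm :: "(('a \<Rightarrow> real) \<Rightarrow> ('a \<Rightarrow> real) \<Rightarrow> real) \<Rightarrow> ('a \<Rightarrow> real) \<Rightarrow> real" where
  "hnorm ip f = sqrt (ip f f)"

definition is_rkhs :: "('a \<Rightarrow> 'a \<Rightarrow> real) \<Rightarrow> 'a set \<Rightarrow> ('a \<Rightarrow> real) set
    \<Rightarrow> (('a \<Rightarrow> real) \<Rightarrow> ('a \<Rightarrow> real) \<Rightarrow> real) \<Rightarrow> bool" where
  "is_rkhs K \<Omega> H ip \<longleftrightarrow>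
     (\<forall>f\<in>H. \<forall>x. x \<notin> \<Omega> \<longrightarrow> f x = 0) \<and>
     (\<lambda>_. 0) \<in> H \<and> (\<forall>f\<in>H. \<forall>g\<in>H. (\<lambda>x. f x + g x) \<in> H) \<and> (\<forall>a. \<forall>f\<in>H. (\<lambda>x. a * f x) \<in> H) \<and>
     (\<forall>f\<in>H. \<forall>g\<in>H. ip f g = ip g f) \<and>
     (\<forall>f\<in>H. \<forall>g\<in>H. \<forall>h\<in>H. ip (\<lambda>x. f x + g x) h = ip f h + ip g h) \<and>
     (\<forall>a. \<forall>f\<in>H. \<forall>g\<in>H. ip (\<lambda>x. a * f x) g = a * ip f g) \<and>
     (\<forall>f\<in>H. ip f f \<ge> 0 \<and> (ip f f = 0 \<longrightarrow> f = (\<lambda>_. 0))) \<and>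
     (\<forall>F. (\<forall>k. F k \<in> H) \<and>
          (\<forall>e>0. \<exists>N. \<forall>m\<ge>N. \<forall>k\<ge>N. hnorm ip (\<lambda>x. F m x - F k x) < e) \<longrightarrow>
          (\<exists>g\<in>H. (\<lambda>k. hnorm ip (\<lambda>x. F k x - g x)) \<longlonglongrightarrow> 0)) \<and>
     (\<forall>x\<in>\<Omega>. kfun K \<Omega> x \<in> H) \<and>
     (\<forall>f\<in>H. \<forall>x\<in>\<Omega>. ip f (kfun K \<Omega> x) = f x)"

definition kcoef :: "('a \<Rightarrow> 'a \<Rightarrow> real) \<Rightarrow> 'a list \<Rightarrow> ('a \<Rightarrow> real) \<Rightarrow> nat \<Rightarrow> real" where
  "kcoef k xs f = (THE \<alpha>. (\<forall>i<length xs. (\<Sum>j<length xs. k (xs!i) (xs!j) * \<alpha> j) = f (xs!i))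
                       \<and> (\<forall>j\<ge>length xs. \<alpha> j = 0))"

text \<open>s_n^mu(f) = sum_j alpha_j K(.,x_j) with (A + mu I) alpha = f|X.
  Since the x_i are pairwise distinct, A + mu I is the kernel matrix of K_mu.\<close>
definition reg_interp :: "('a \<Rightarrow> 'a \<Rightarrow> real) \<Rightarrow> 'a list \<Rightarrow> real \<Rightarrow> ('a \<Rightarrow> real) \<Rightarrow> 'a \<Rightarrow> real" where
  "reg_interp K xs \<mu> f = (\<lambda>x. \<Sum>j<length xs. kcoef (delta_kernel K \<mu>) xs f j * K x (xs!j))"

definition delta_interp :: "('a \<Rightarrow> 'a \<Rightarrow> real) \<Rightarrow> 'a list \<Rightarrow> real \<Rightarrow> ('a \<Rightarrow> real) \<Rightarrow> 'a \<Rightarrow> real" where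
  "delta_interp K xs lam f = (\<lambda>x. \<Sum>j<length xs. kcoef (delta_kernel K lam) xs f j * delta_kernel K lam x (xs!j))"

definition power_fun :: "('a \<Rightarrow> 'a \<Rightarrow> real) \<Rightarrow> ('a \<Rightarrow> real) set
    \<Rightarrow> (('a \<Rightarrow> real) \<Rightarrow> ('a \<Rightarrow> real) \<Rightarrow> real) \<Rightarrow> 'a list \<Rightarrow> real \<Rightarrow> 'a \<Rightarrow> real" where
  "power_fun K H ip xs \<mu> x =
     (SUP f\<in>{f\<in>H. f \<noteq> (\<lambda>_. 0)}. \<bar>f x - reg_interp K xs \<mu> f x\<bar> / hnorm ip f)"

definition power_fun_delta :: "('a \<Rightarrow> 'a \<Rightarrow> real) \<Rightarrow> ('a \<Rightarrow> real) set
    \<Rightarrow> (('a \<Rightarrow> real) \<Rightarrow> ('a \<Rightarrow> real) \<Rightarrow> real) \<Rightarrow> 'a list \<Rightarrow> real \<Rightarrow> 'a \<Rightarrow> real" where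
  "power_fun_delta K Hl ipl xs lam x =
     (SUP f\<in>{f\<in>Hl. f \<noteq> (\<lambda>_. 0)}. \<bar>f x - delta_interp K xs lam f x\<bar> / hnorm ipl f)"

end

theory Submission
  imports Defs "Jordan_Normal_Form.Determinant"
begin

text \<open>For any weights \<open>u\<close>, the functional \<open>f \<mapsto> f(x) - \<Sum>\<^sub>i u\<^sub>i f(x\<^sub>i)\<close> on the native space
  is represented by \<open>g = K(\<cdot>,x) - \<Sum>\<^sub>i u\<^sub>i K(\<cdot>,x\<^sub>i)\<close>, so the supremum defining a power
  function is \<open>\<parallel>g\<parallel> = \<surd>E(u)\<close> with the quadratic error form
  \<open>E(u) = K(x,x) - 2 \<Sum>\<^sub>i u\<^sub>i K(x,x\<^sub>i) + u\<^sup>T A u\<close>.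
  Because the system matrices are symmetric, \<open>s\<^sub>n\<^sup>\<mu>\<close> and \<open>I\<^sub>n\<^sup>\<lambda>\<close> are such weighted schemes,
  with weights \<open>u\<close> solving \<open>(A + \<mu> I) u = (K(x,x\<^sub>i))\<^sub>i\<close>. Everything then reduces to algebra
  on \<open>E\<close>: the interpolation weights (\<open>\<mu> = 0\<close>) minimize \<open>E\<close>; at a node \<open>x\<^sub>p\<close> one gets
  \<open>E(u) = \<lambda> (u\<^sub>p - |u|\<^sup>2) \<le> \<lambda>\<close>; and off the nodes \<open>K\<^sub>\<lambda>(x,x\<^sub>i) = K(x,x\<^sub>i)\<close>, so
  \<open>Q\<^sub>n\<^sup>\<lambda>(x)\<^sup>2 = E(u) + \<lambda> (1 + |u|\<^sup>2) \<ge> max (P\<^sub>n\<^sup>\<lambda>(x)\<^sup>2, \<lambda>)\<close>.\<close>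

definition kernel_matrix_injective :: "('a \<Rightarrow> 'a \<Rightarrow> real) \<Rightarrow> 'a list \<Rightarrow> bool" where
  "kernel_matrix_injective m xs \<longleftrightarrow>
     (\<forall>c. (\<forall>i<length xs. (\<Sum>j<length xs. m (xs!i) (xs!j) * c j) = 0) \<longrightarrow> (\<forall>j<length xs. c j = 0))"

definition kernel_quad_form :: "('a \<Rightarrow> 'a \<Rightarrow> real) \<Rightarrow> 'a list \<Rightarrow> (nat \<Rightarrow> real) \<Rightarrow> real" where
  "kernel_quad_form m xs c = (\<Sum>i<length xs. \<Sum>j<length xs. c i * c j * m (xs!i) (xs!j))"

definition error_form :: "('a \<Rightarrow> 'a \<Rightarrow> real) \<Rightarrow> 'a list \<Rightarrow> 'a \<Rightarrow> (nat \<Rightarrow> real) \<Rightarrow> real" where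
  "error_form k xs x u = k x x - 2 * (\<Sum>i<length xs. u i * k x (xs!i)) + kernel_quad_form k xs u"

lemma square_system_solvable:
  fixes M :: "nat \<Rightarrow> nat \<Rightarrow> real"
  assumes inj: "\<And>c. \<forall>i<n. (\<Sum>j<n. M i j * c j) = 0 \<Longrightarrow> \<forall>j<n. c j = 0"
  shows "\<exists>\<alpha>. \<forall>i<n. (\<Sum>j<n. M i j * \<alpha> j) = y i"
proof -
  define A where "A = mat n n (\<lambda>(i,j). M i j)"
  have A: "A \<in> carrier_mat n n" unfolding A_def by simp
  have row: "vec_index (A *\<^sub>v v) i = (\<Sum>j<n. M i j * vec_index v j)"
    if "v \<in> carrier_vec n" "i < n" for v i
    using that by (simp add: A_def scalar_prod_def lessThan_atLeast0)
  have "det A \<noteq> 0"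
  proof
    assume "det A = 0"
    then obtain v where v: "v \<in> carrier_vec n" "v \<noteq> 0\<^sub>v n" "A *\<^sub>v v = 0\<^sub>v n"
      using det_0_iff_vec_prod_zero[OF A] by auto
    have "\<forall>i<n. (\<Sum>j<n. M i j * vec_index v j) = 0"
      using row[OF v(1)] v(3) by (metis index_zero_vec(1))
    from inj[OF this] have "v = 0\<^sub>v n" using v(1) by (intro eq_vecI) auto
    with v(2) show False ..
  qed
  then obtain B where B: "B \<in> carrier_mat n n" and AB: "A * B = 1\<^sub>m n"
    using det_non_zero_imp_unit[OF A, of "()"] unfolding Units_def ring_mat_def by auto
  define w where "w = vec n y"
  define a where "a = B *\<^sub>v w"
  have w: "w \<in> carrier_vec n" by (simp add: w_def)
  have a: "a \<in> carrier_vec n" using B w by (simp add: a_def)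
  have "A *\<^sub>v a = w"
    unfolding a_def using assoc_mult_mat_vec[OF A B w] AB w by simp
  show ?thesis
  proof (intro exI allI impI)
    fix i assume "i < n"
    with \<open>A *\<^sub>v a = w\<close> row[OF a this] show "(\<Sum>j<n. M i j * vec_index a j) = y i"
      by (simp add: w_def)
  qed
qed

lemma kcoef_solves:
  assumes inj: "kernel_matrix_injective m xs" and i: "i < length xs"
  shows "(\<Sum>j<length xs. m (xs!i) (xs!j) * kcoef m xs f j) = f (xs!i)"
proof -
  let ?n = "length xs"
  let ?P = "\<lambda>\<alpha>. (\<forall>i<?n. (\<Sum>j<?n. m (xs!i) (xs!j) * \<alpha> j) = f (xs!i)) \<and> (\<forall>j\<ge>?n. \<alpha> j = 0)"
  have inj': "\<And>c. \<forall>i<?n. (\<Sum>j<?n. m (xs!i) (xs!j) * c j) = 0 \<Longrightarrow> \<forall>j<?n. c j = 0"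
    using inj unfolding kernel_matrix_injective_def by blast
  obtain a where a: "\<forall>i<?n. (\<Sum>j<?n. m (xs!i) (xs!j) * a j) = f (xs!i)"
    using square_system_solvable[where M="\<lambda>i j. m (xs!i) (xs!j)" and y="\<lambda>i. f (xs!i)", OF inj'] by blast
  define a' where "a' = (\<lambda>j. if j < ?n then a j else 0)"
  have "?P a'" using a by (simp add: a'_def)
  moreover have "\<beta> = a'" if "?P \<beta>" for \<beta>
  proof -
    have "\<forall>i<?n. (\<Sum>j<?n. m (xs!i) (xs!j) * (\<beta> j - a' j)) = 0"
      using that \<open>?P a'\<close> by (simp add: right_diff_distrib sum_subtractf)
    from inj'[OF this] have "\<forall>j<?n. \<beta> j = a' j" by simp
    with that show ?thesis by (auto simp: a'_def not_less)
  qed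
  ultimately have "?P (kcoef m xs f)" unfolding kcoef_def by (rule theI)
  with i show ?thesis by blast
qed

lemma kcoef_cong:
  assumes "\<forall>i<length xs. f (xs!i) = g (xs!i)"
  shows "kcoef m xs f = kcoef m xs g"
  unfolding kcoef_def using assms by simp

text \<open>By symmetry of \<open>m\<close>, the value at \<open>x\<close> of the interpolant of \<open>f\<close> is a weighted sum of
  the data \<open>f(x\<^sub>i)\<close>, with weights the coefficients of the interpolant of \<open>k(x,\<cdot>)\<close>.\<close>
lemma kcoef_sum_swap:
  assumes inj: "kernel_matrix_injective m xs" and sym: "\<forall>a\<in>set xs. \<forall>b\<in>set xs. m a b = m b a"
  shows "(\<Sum>j<length xs. kcoef m xs f j * g (xs!j)) = (\<Sum>i<length xs. kcoef m xs g i * f (xs!i))"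
proof -
  let ?n = "length xs" and ?a = "kcoef m xs f" and ?u = "kcoef m xs g"
  have "(\<Sum>j<?n. ?a j * g (xs!j)) = (\<Sum>j<?n. ?a j * (\<Sum>i<?n. m (xs!j) (xs!i) * ?u i))"
    by (intro sum.cong refl) (simp add: kcoef_solves[OF inj])
  also have "\<dots> = (\<Sum>j<?n. \<Sum>i<?n. ?u i * (m (xs!i) (xs!j) * ?a j))"
    using sym by (intro sum.cong refl) (auto simp: sum_distrib_left algebra_simps)
  also have "\<dots> = (\<Sum>i<?n. ?u i * (\<Sum>j<?n. m (xs!i) (xs!j) * ?a j))"
    by (subst sum.swap) (simp add: sum_distrib_left)
  also have "\<dots> = (\<Sum>i<?n. ?u i * f (xs!i))"
    by (intro sum.cong refl) (simp add: kcoef_solves[OF inj])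
  finally show ?thesis .
qed

lemma kernel_quad_form_eq_sum_rows:
  "kernel_quad_form m xs c = (\<Sum>i<length xs. c i * (\<Sum>j<length xs. m (xs!i) (xs!j) * c j))"
  unfolding kernel_quad_form_def by (simp add: sum_distrib_left algebra_simps)

lemma kernel_quad_form_diff:
  assumes sym: "\<forall>a\<in>set xs. \<forall>b\<in>set xs. m a b = m b a"
  shows "kernel_quad_form m xs (\<lambda>i. u i - v i)
    = kernel_quad_form m xs u - 2 * (\<Sum>i<length xs. u i * (\<Sum>j<length xs. m (xs!i) (xs!j) * v j))
      + kernel_quad_form m xs v"
proof -
  let ?n = "length xs" and ?M = "\<lambda>i j. m (xs!i) (xs!j)"
  have swap: "(\<Sum>i<?n. \<Sum>j<?n. v i * u j * ?M i j) = (\<Sum>i<?n. \<Sum>j<?n. u i * v j * ?M i j)"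
    using sym by (subst sum.swap) (intro sum.cong refl, simp add: algebra_simps)
  have "kernel_quad_form m xs (\<lambda>i. u i - v i)
      = (\<Sum>i<?n. \<Sum>j<?n. u i * u j * ?M i j - u i * v j * ?M i j - v i * u j * ?M i j + v i * v j * ?M i j)"
    unfolding kernel_quad_form_def by (intro sum.cong refl) (simp add: algebra_simps)
  also have "\<dots> = kernel_quad_form m xs u - (\<Sum>i<?n. \<Sum>j<?n. u i * v j * ?M i j)
      - (\<Sum>i<?n. \<Sum>j<?n. v i * u j * ?M i j) + kernel_quad_form m xs v"
    by (simp only: kernel_quad_form_def sum.distrib sum_subtractf)
  finally have expand: "kernel_quad_form m xs (\<lambda>i. u i - v i) = kernel_quad_form m xs u
      - (\<Sum>i<?n. \<Sum>j<?n. u i * v j * ?M i j) - (\<Sum>i<?n. \<Sum>j<?n. v i * u j * ?M i j)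
      + kernel_quad_form m xs v" .
  have cross: "(\<Sum>i<?n. \<Sum>j<?n. u i * v j * ?M i j) = (\<Sum>i<?n. u i * (\<Sum>j<?n. ?M i j * v j))"
    by (simp add: sum_distrib_left mult_ac)
  from expand swap cross show ?thesis by linarith
qed

lemma kernel_matrix_injectiveI:
  assumes pos: "\<And>c. \<exists>i<length xs. c i \<noteq> 0 \<Longrightarrow> 0 < kernel_quad_form m xs c"
  shows "kernel_matrix_injective m xs"
  unfolding kernel_matrix_injective_def
proof (rule allI, rule impI)
  fix c assume "\<forall>i<length xs. (\<Sum>j<length xs. m (xs!i) (xs!j) * c j) = 0"
  then have "kernel_quad_form m xs c = 0" by (simp add: kernel_quad_form_eq_sum_rows)
  with pos show "\<forall>j<length xs. c j = 0" by force
qed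

lemma strictly_pd_kernel_sym:
  "strictly_pd_kernel K \<Omega> \<Longrightarrow> x \<in> \<Omega> \<Longrightarrow> y \<in> \<Omega> \<Longrightarrow> K x y = K y x"
  unfolding strictly_pd_kernel_def by blast

lemma strictly_pd_kernel_quad_form_pos:
  assumes spd: "strictly_pd_kernel K \<Omega>" and "distinct xs" "set xs \<subseteq> \<Omega>"
    and nz: "\<exists>i<length xs. c i \<noteq> 0"
  shows "0 < kernel_quad_form K xs c"
proof -
  let ?n = "length xs"
  have inj: "inj_on (nth xs) {..<?n}" using \<open>distinct xs\<close> by (simp add: inj_on_nth)
  have set_xs: "set xs = nth xs ` {..<?n}" by (auto simp: in_set_conv_nth)
  define c' where "c' = c \<circ> inv_into {..<?n} (nth xs)"
  have c': "c' (xs!i) = c i" if "i < ?n" for i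
    using inv_into_f_f[OF inj] that by (simp add: c'_def)
  have "\<exists>y\<in>set xs. c' y \<noteq> 0" using nz c' by (metis nth_mem)
  with spd \<open>set xs \<subseteq> \<Omega>\<close> have "0 < (\<Sum>y\<in>set xs. \<Sum>z\<in>set xs. c' y * c' z * K y z)"
    unfolding strictly_pd_kernel_def by blast
  also have "\<dots> = kernel_quad_form K xs c"
    unfolding kernel_quad_form_def set_xs sum.reindex[OF inj] by (simp add: c')
  finally show ?thesis .
qed

lemma strictly_pd_kernel_quad_form_nonneg:
  assumes "strictly_pd_kernel K \<Omega>" "distinct xs" "set xs \<subseteq> \<Omega>"
  shows "0 \<le> kernel_quad_form K xs c"
proof (cases "\<exists>i<length xs. c i \<noteq> 0")
  case True
  with strictly_pd_kernel_quad_form_pos[OF assms] show ?thesis by (simp add: less_imp_le)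
qed (simp add: kernel_quad_form_def)

lemma strictly_pd_kernel_diag_pos:
  assumes "strictly_pd_kernel K \<Omega>" "x \<in> \<Omega>"
  shows "0 < K x x"
  using strictly_pd_kernel_quad_form_pos[OF assms(1), of "[x]" "\<lambda>_. 1"] assms(2)
  by (simp add: kernel_quad_form_def)

lemma delta_kernel_row:
  assumes "distinct xs" "i < length xs"
  shows "(\<Sum>j<length xs. delta_kernel K \<mu> (xs!i) (xs!j) * c j)
    = (\<Sum>j<length xs. K (xs!i) (xs!j) * c j) + \<mu> * c i"
proof -
  have "(\<Sum>j<length xs. delta_kernel K \<mu> (xs!i) (xs!j) * c j)
      = (\<Sum>j<length xs. K (xs!i) (xs!j) * c j + (if j = i then \<mu> * c i else 0))"
    using assms by (intro sum.cong refl) (auto simp: delta_kernel_def nth_eq_iff_index_eq algebra_simps)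
  with assms(2) show ?thesis by (simp add: sum.distrib)
qed

lemma kernel_quad_form_delta_kernel:
  assumes "distinct xs"
  shows "kernel_quad_form (delta_kernel K \<mu>) xs c
    = kernel_quad_form K xs c + \<mu> * (\<Sum>i<length xs. (c i)\<^sup>2)"
proof -
  let ?n = "length xs"
  have "kernel_quad_form (delta_kernel K \<mu>) xs c
      = (\<Sum>i<?n. c i * ((\<Sum>j<?n. K (xs!i) (xs!j) * c j) + \<mu> * c i))"
    unfolding kernel_quad_form_eq_sum_rows using assms
    by (intro sum.cong refl) (simp add: delta_kernel_row)
  also have "\<dots> = kernel_quad_form K xs c + \<mu> * (\<Sum>i<?n. (c i)\<^sup>2)"
    unfolding kernel_quad_form_eq_sum_rows
    by (simp add: distrib_left sum.distrib sum_distrib_left power2_eq_square mult_ac)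
  finally show ?thesis .
qed

lemma delta_kernel_matrix_injective:
  assumes "strictly_pd_kernel K \<Omega>" "distinct xs" "set xs \<subseteq> \<Omega>" and "0 \<le> \<mu>"
  shows "kernel_matrix_injective (delta_kernel K \<mu>) xs"
proof (rule kernel_matrix_injectiveI)
  fix c :: "nat \<Rightarrow> real" assume "\<exists>i<length xs. c i \<noteq> 0"
  with strictly_pd_kernel_quad_form_pos[OF assms(1-3)]
  have "0 < kernel_quad_form K xs c" .
  moreover have "0 \<le> \<mu> * (\<Sum>i<length xs. (c i)\<^sup>2)" using \<open>0 \<le> \<mu>\<close> by (simp add: sum_nonneg)
  ultimately show "0 < kernel_quad_form (delta_kernel K \<mu>) xs c"
    unfolding kernel_quad_form_delta_kernel[OF \<open>distinct xs\<close>] by linarith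
qed

text \<open>As \<open>x\<close> is not a node, \<open>K\<^sub>\<mu>(x,x\<^sub>i) = K(x,x\<^sub>i)\<close>: only \<open>K\<^sub>\<mu>(x,x)\<close> and the quadratic
  form pick up \<open>\<mu>\<close>.\<close>
lemma error_form_delta_kernel:
  assumes "distinct xs" "x \<notin> set xs"
  shows "error_form (delta_kernel K \<mu>) xs x u
    = error_form K xs x u + \<mu> * (1 + (\<Sum>i<length xs. (u i)\<^sup>2))"
proof -
  have "delta_kernel K \<mu> x (xs!i) = K x (xs!i)" if "i < length xs" for i
    using assms(2) that by (auto simp: delta_kernel_def)
  then have "(\<Sum>i<length xs. u i * delta_kernel K \<mu> x (xs!i)) = (\<Sum>i<length xs. u i * K x (xs!i))"
    by simp
  then show ?thesis
    unfolding error_form_def kernel_quad_form_delta_kernel[OF assms(1)]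
    by (simp add: delta_kernel_def algebra_simps)
qed

lemma error_form_at_node_le:
  assumes weights: "\<forall>i<length xs. (\<Sum>j<length xs. k (xs!i) (xs!j) * u j) + \<mu> * u i = k (xs!p) (xs!i)"
    and p: "p < length xs" and "0 \<le> \<mu>"
  shows "error_form k xs (xs!p) u \<le> \<mu>"
proof -
  let ?n = "length xs"
  have rows: "(\<Sum>j<?n. k (xs!i) (xs!j) * u j) = k (xs!p) (xs!i) - \<mu> * u i" if "i < ?n" for i
    using weights that by (simp add: eq_diff_eq)
  have "kernel_quad_form k xs u = (\<Sum>i<?n. u i * (k (xs!p) (xs!i) - \<mu> * u i))"
    unfolding kernel_quad_form_eq_sum_rows by (intro sum.cong refl) (simp add: rows)
  also have "\<dots> = (\<Sum>i<?n. u i * k (xs!p) (xs!i)) - \<mu> * (\<Sum>i<?n. (u i)\<^sup>2)"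
    by (simp add: right_diff_distrib sum_subtractf sum_distrib_left power2_eq_square mult_ac)
  finally have quad: "kernel_quad_form k xs u
      = (\<Sum>i<?n. u i * k (xs!p) (xs!i)) - \<mu> * (\<Sum>i<?n. (u i)\<^sup>2)" .
  have lin: "(\<Sum>i<?n. u i * k (xs!p) (xs!i)) = k (xs!p) (xs!p) - \<mu> * u p"
    using rows[OF p] by (simp add: mult.commute)
  have "(u p)\<^sup>2 \<le> (\<Sum>i<?n. (u i)\<^sup>2)" using p by (intro member_le_sum) auto
  moreover have "u p - (u p)\<^sup>2 \<le> 1"
    using zero_le_power2[of "u p - 1/2"] by (simp add: power2_eq_square algebra_simps)
  ultimately have "u p - (\<Sum>i<?n. (u i)\<^sup>2) \<le> 1" by linarith
  then have "\<mu> * (u p - (\<Sum>i<?n. (u i)\<^sup>2)) \<le> \<mu>"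
    using \<open>0 \<le> \<mu>\<close> mult_left_mono by fastforce
  moreover have "error_form k xs (xs!p) u = \<mu> * (u p - (\<Sum>i<?n. (u i)\<^sup>2))"
    unfolding error_form_def quad lin by (simp add: algebra_simps)
  ultimately show ?thesis by simp
qed

text \<open>\<open>E(u) - E(v)\<close> is the quadratic form of \<open>u - v\<close>.\<close>
lemma error_form_min_at_interpolation_weights:
  assumes sym: "\<forall>a\<in>set xs. \<forall>b\<in>set xs. k a b = k b a"
    and psd: "\<And>c. 0 \<le> kernel_quad_form k xs c"
    and weights: "\<forall>i<length xs. (\<Sum>j<length xs. k (xs!i) (xs!j) * v j) = k x (xs!i)"
  shows "error_form k xs x v \<le> error_form k xs x u"
proof -
  let ?n = "length xs"
  have "kernel_quad_form k xs v = (\<Sum>i<?n. v i * k x (xs!i))"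
    unfolding kernel_quad_form_eq_sum_rows using weights by simp
  moreover have "kernel_quad_form k xs (\<lambda>i. u i - v i)
      = kernel_quad_form k xs u - 2 * (\<Sum>i<?n. u i * k x (xs!i)) + kernel_quad_form k xs v"
    unfolding kernel_quad_form_diff[OF sym] using weights by simp
  ultimately show ?thesis
    using psd[of "\<lambda>i. u i - v i"] unfolding error_form_def by linarith
qed

locale rkhs =
  fixes k :: "'a \<Rightarrow> 'a \<Rightarrow> real" and \<Omega> :: "'a set" and H :: "('a \<Rightarrow> real) set"
    and ip :: "('a \<Rightarrow> real) \<Rightarrow> ('a \<Rightarrow> real) \<Rightarrow> real"
  assumes is_rkhs: "is_rkhs k \<Omega> H ip"
begin

lemma
  shows zero_mem: "(\<lambda>_. 0) \<in> H"
    and add_mem: "f \<in> H \<Longrightarrow> g \<in> H \<Longrightarrow> (\<lambda>x. f x + g x) \<in> H"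
    and scale_mem: "f \<in> H \<Longrightarrow> (\<lambda>x. a * f x) \<in> H"
    and ip_sym: "f \<in> H \<Longrightarrow> g \<in> H \<Longrightarrow> ip f g = ip g f"
    and ip_add_left: "f \<in> H \<Longrightarrow> g \<in> H \<Longrightarrow> h \<in> H \<Longrightarrow> ip (\<lambda>x. f x + g x) h = ip f h + ip g h"
    and ip_scale_left: "f \<in> H \<Longrightarrow> g \<in> H \<Longrightarrow> ip (\<lambda>x. a * f x) g = a * ip f g"
    and ip_self_nonneg: "f \<in> H \<Longrightarrow> 0 \<le> ip f f"
    and ip_self_eq_0: "f \<in> H \<Longrightarrow> ip f f = 0 \<Longrightarrow> f = (\<lambda>_. 0)"
    and kfun_mem: "x \<in> \<Omega> \<Longrightarrow> kfun k \<Omega> x \<in> H"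
    and reproducing: "f \<in> H \<Longrightarrow> x \<in> \<Omega> \<Longrightarrow> ip f (kfun k \<Omega> x) = f x"
  using is_rkhs unfolding is_rkhs_def by auto

lemma ip_zero_right: "f \<in> H \<Longrightarrow> ip f (\<lambda>_. 0) = 0"
  using ip_sym[OF _ zero_mem] ip_scale_left[OF zero_mem, of f 0] by simp

lemma ip_add_right: "f \<in> H \<Longrightarrow> g \<in> H \<Longrightarrow> h \<in> H \<Longrightarrow> ip h (\<lambda>x. f x + g x) = ip h f + ip h g"
  by (simp add: ip_sym[of h] add_mem ip_add_left)

lemma ip_scale_right: "f \<in> H \<Longrightarrow> g \<in> H \<Longrightarrow> ip g (\<lambda>x. a * f x) = a * ip g f"
  by (simp add: ip_sym[of g] scale_mem ip_scale_left)

lemma kernel_sym: "x \<in> \<Omega> \<Longrightarrow> y \<in> \<Omega> \<Longrightarrow> k x y = k y x"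
  using reproducing[OF kfun_mem, of x y] reproducing[OF kfun_mem, of y x]
    ip_sym[OF kfun_mem kfun_mem, of x y]
  by (simp add: kfun_def)

lemma sum_mem_and_ip_sum_right:
  fixes N :: nat
  assumes "\<And>i. i < N \<Longrightarrow> h i \<in> H"
  shows "(\<lambda>y. \<Sum>i<N. c i * h i y) \<in> H \<and>
    (\<forall>f\<in>H. ip f (\<lambda>y. \<Sum>i<N. c i * h i y) = (\<Sum>i<N. c i * ip f (h i)))"
  using assms
proof (induction N)
  case 0
  then show ?case using zero_mem ip_zero_right by simp
next
  case (Suc N)
  let ?S = "\<lambda>y. \<Sum>i<N. c i * h i y"
  have S: "?S \<in> H" "\<And>f. f \<in> H \<Longrightarrow> ip f ?S = (\<Sum>i<N. c i * ip f (h i))" using Suc by auto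
  have hN: "h N \<in> H" and scaled: "(\<lambda>y. c N * h N y) \<in> H" using Suc scale_mem by auto
  have "(\<lambda>y. \<Sum>i<Suc N. c i * h i y) = (\<lambda>y. ?S y + c N * h N y)" by simp
  then show ?case
    using add_mem[OF S(1) scaled] S(2) ip_add_right[OF S(1) scaled] ip_scale_right[OF hN] by simp
qed

lemma cauchy_schwarz:
  assumes f: "f \<in> H" and g: "g \<in> H"
  shows "\<bar>ip f g\<bar> \<le> hnorm ip f * hnorm ip g"
proof (cases "ip g g = 0")
  case True
  then show ?thesis
    using ip_self_eq_0[OF g] ip_zero_right[OF f] ip_self_nonneg[OF f] ip_self_nonneg[OF g]
    by (simp add: hnorm_def)
next
  case False
  with ip_self_nonneg[OF g] have gg: "0 < ip g g" by simp
  define t where "t = ip f g / ip g g"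
  define h where "h = (\<lambda>x. f x + (- t) * g x)"
  have tg: "(\<lambda>x. (- t) * g x) \<in> H" using scale_mem[OF g] .
  have h: "h \<in> H" unfolding h_def using add_mem[OF f tg] .
  have "ip h h = ip f h + (- t) * ip g h"
    using ip_add_left[OF f tg h] ip_scale_left[OF g h] by (simp only: h_def)
  also have "ip f h = ip f f + (- t) * ip f g"
    using ip_add_right[OF f tg f] ip_scale_right[OF g f] by (simp only: h_def)
  also have "ip g h = ip g f + (- t) * ip g g"
    using ip_add_right[OF f tg g] ip_scale_right[OF g g] by (simp only: h_def)
  finally have "ip h h = ip f f - 2 * t * ip f g + t\<^sup>2 * ip g g"
    using ip_sym[OF f g] by (simp add: algebra_simps power2_eq_square)
  also have "\<dots> = ip f f - (ip f g)\<^sup>2 / ip g g"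
    using gg by (simp add: t_def field_simps power2_eq_square)
  finally have "0 \<le> ip f f - (ip f g)\<^sup>2 / ip g g" using ip_self_nonneg[OF h] by simp
  then have "(ip f g)\<^sup>2 \<le> ip f f * ip g g" using gg by (simp add: field_simps)
  then have "sqrt ((ip f g)\<^sup>2) \<le> sqrt (ip f f * ip g g)" by (rule real_sqrt_le_mono)
  then show ?thesis unfolding hnorm_def by (simp add: real_sqrt_mult)
qed

text \<open>Cauchy-Schwarz bounds the supremum, which is attained at \<open>f = g\<close>.\<close>
lemma SUP_ip_ratio_eq_hnorm:
  assumes g: "g \<in> H" and nontrivial: "\<exists>f\<in>H. f \<noteq> (\<lambda>_. 0)"
  shows "(SUP f\<in>{f\<in>H. f \<noteq> (\<lambda>_. 0)}. \<bar>ip f g\<bar> / hnorm ip f) = hnorm ip g"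
proof -
  let ?S = "{f\<in>H. f \<noteq> (\<lambda>_. 0)}"
  have hnorm_pos: "0 < hnorm ip f" if "f \<in> ?S" for f
    using that ip_self_eq_0 ip_self_nonneg[of f] by (force simp: hnorm_def)
  have ub: "\<bar>ip f g\<bar> / hnorm ip f \<le> hnorm ip g" if "f \<in> ?S" for f
    using cauchy_schwarz[OF _ g, of f] hnorm_pos[OF that] that by (simp add: divide_le_eq mult.commute)
  have "?S \<noteq> {}" using nontrivial by auto
  show ?thesis
  proof (cases "g = (\<lambda>_. 0)")
    case True
    then have "hnorm ip g = 0" using ip_zero_right[OF g] by (simp add: hnorm_def)
    moreover have "(SUP f\<in>?S. \<bar>ip f g\<bar> / hnorm ip f) = (SUP f\<in>?S. 0)"
      using True ip_zero_right by (intro SUP_cong) auto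
    ultimately show ?thesis using \<open>?S \<noteq> {}\<close> by simp
  next
    case False
    then have gS: "g \<in> ?S" using g by simp
    have "\<bar>ip g g\<bar> / hnorm ip g = hnorm ip g"
      using hnorm_pos[OF gS] ip_self_nonneg[OF g] unfolding hnorm_def
      by (metis abs_of_nonneg real_div_sqrt)
    then have "hnorm ip g \<le> (SUP f\<in>?S. \<bar>ip f g\<bar> / hnorm ip f)"
      using ub gS by (metis (no_types, lifting) bdd_aboveI2 cSUP_upper)
    moreover have "(SUP f\<in>?S. \<bar>ip f g\<bar> / hnorm ip f) \<le> hnorm ip g"
      using \<open>?S \<noteq> {}\<close> ub by (rule cSUP_least)
    ultimately show ?thesis by simp
  qed
qed

lemma error_representer:
  assumes x: "x \<in> \<Omega>" and nodes: "set xs \<subseteq> \<Omega>"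
  obtains g where "g \<in> H"
    and "\<And>f. f \<in> H \<Longrightarrow> ip f g = f x - (\<Sum>i<length xs. u i * f (xs!i))"
    and "ip g g = error_form k xs x u"
proof -
  let ?n = "length xs"
  have xi: "xs!i \<in> \<Omega>" if "i < ?n" for i using nodes that by auto
  define s where "s = (\<lambda>y. \<Sum>i<?n. u i * kfun k \<Omega> (xs!i) y)"
  have s: "s \<in> H" "\<And>f. f \<in> H \<Longrightarrow> ip f s = (\<Sum>i<?n. u i * f (xs!i))"
    using sum_mem_and_ip_sum_right[of ?n "\<lambda>i. kfun k \<Omega> (xs!i)" u] kfun_mem xi reproducing
    unfolding s_def by auto
  have ms: "(\<lambda>y. (- 1) * s y) \<in> H" using scale_mem[OF s(1)] .
  define g where "g = (\<lambda>y. kfun k \<Omega> x y + (- 1) * s y)"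
  have g: "g \<in> H" unfolding g_def using add_mem[OF kfun_mem[OF x] ms] .
  have ip_g: "ip f g = f x - (\<Sum>i<?n. u i * f (xs!i))" if f: "f \<in> H" for f
  proof -
    have "ip f g = ip f (kfun k \<Omega> x) + ip f (\<lambda>y. (- 1) * s y)"
      unfolding g_def by (rule ip_add_right[OF kfun_mem[OF x] ms f])
    also have "ip f (\<lambda>y. (- 1) * s y) = (- 1) * ip f s" by (rule ip_scale_right[OF s(1) f])
    finally show ?thesis using s(2)[OF f] reproducing[OF f x] by simp
  qed
  have g_at: "g y = k y x - (\<Sum>j<?n. u j * k y (xs!j))" if "y \<in> \<Omega>" for y
    using that xi unfolding g_def s_def kfun_def by simp
  have "(\<Sum>i<?n. u i * g (xs!i)) = (\<Sum>i<?n. u i * k x (xs!i) - (\<Sum>j<?n. u i * u j * k (xs!i) (xs!j)))"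
    by (intro sum.cong refl)
      (simp add: g_at xi kernel_sym[OF _ x] right_diff_distrib sum_distrib_left mult.assoc)
  then have "ip g g = error_form k xs x u"
    using ip_g[OF g] g_at[OF x]
    by (simp add: error_form_def kernel_quad_form_def sum_subtractf)
  with g ip_g that show ?thesis by blast
qed

lemma error_form_nonneg:
  assumes "x \<in> \<Omega>" "set xs \<subseteq> \<Omega>"
  shows "0 \<le> error_form k xs x u"
proof -
  obtain g where "g \<in> H" "ip g g = error_form k xs x u"
    using error_representer[OF assms, where u = u] by blast
  with ip_self_nonneg show ?thesis by metis
qed

lemma SUP_weighted_error:
  assumes x: "x \<in> \<Omega>" and nodes: "set xs \<subseteq> \<Omega>" and "0 < k x x"
  shows "(SUP f\<in>{f\<in>H. f \<noteq> (\<lambda>_. 0)}. \<bar>f x - (\<Sum>i<length xs. u i * f (xs!i))\<bar> / hnorm ip f)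
    = sqrt (error_form k xs x u)"
proof -
  obtain g where g: "g \<in> H" "\<And>f. f \<in> H \<Longrightarrow> ip f g = f x - (\<Sum>i<length xs. u i * f (xs!i))"
    "ip g g = error_form k xs x u"
    using error_representer[OF x nodes, where u = u] by blast
  have "kfun k \<Omega> x \<noteq> (\<lambda>_. 0)" using \<open>0 < k x x\<close> x by (metis kfun_def less_irrefl)
  then have nontrivial: "\<exists>f\<in>H. f \<noteq> (\<lambda>_. 0)" using kfun_mem[OF x] by blast
  have "(SUP f\<in>{f\<in>H. f \<noteq> (\<lambda>_. 0)}. \<bar>f x - (\<Sum>i<length xs. u i * f (xs!i))\<bar> / hnorm ip f)
      = (SUP f\<in>{f\<in>H. f \<noteq> (\<lambda>_. 0)}. \<bar>ip f g\<bar> / hnorm ip f)"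
    using g(2) by (intro SUP_cong) auto
  also have "\<dots> = hnorm ip g" using SUP_ip_ratio_eq_hnorm[OF g(1) nontrivial] .
  finally show ?thesis using g(3) by (simp add: hnorm_def)
qed

text \<open>Both \<open>s\<^sub>n\<^sup>\<mu>\<close> (\<open>k = K\<close>, \<open>m = K\<^sub>\<mu>\<close>) and \<open>I\<^sub>n\<^sup>\<lambda>\<close> (\<open>k = m = K\<^sub>\<lambda>\<close>) are of this form.\<close>
lemma SUP_interpolation_error:
  assumes "x \<in> \<Omega>" "set xs \<subseteq> \<Omega>" "0 < k x x"
    and "kernel_matrix_injective m xs" "\<forall>a\<in>set xs. \<forall>b\<in>set xs. m a b = m b a"
  shows "(SUP f\<in>{f\<in>H. f \<noteq> (\<lambda>_. 0)}.
            \<bar>f x - (\<Sum>j<length xs. kcoef m xs f j * k x (xs!j))\<bar> / hnorm ip f)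
    = sqrt (error_form k xs x (kcoef m xs (k x)))"
  using SUP_weighted_error[OF assms(1-3)] kcoef_sum_swap[OF assms(4,5), where g = "k x"] by simp

end

context
  fixes K :: "'a \<Rightarrow> 'a \<Rightarrow> real" and \<Omega> :: "'a set" and xs :: "'a list"
  assumes spd: "strictly_pd_kernel K \<Omega>" and distinct: "distinct xs" and nodes: "set xs \<subseteq> \<Omega>"
begin

lemma delta_kernel_sym_on_nodes: "\<forall>a\<in>set xs. \<forall>b\<in>set xs. delta_kernel K \<mu> a b = delta_kernel K \<mu> b a"
  using nodes strictly_pd_kernel_sym[OF spd] by (auto simp: delta_kernel_def)

lemma regularized_kcoef_solves:
  assumes "0 \<le> \<mu>" "i < length xs"
  shows "(\<Sum>j<length xs. K (xs!i) (xs!j) * kcoef (delta_kernel K \<mu>) xs f j)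
      + \<mu> * kcoef (delta_kernel K \<mu>) xs f i = f (xs!i)"
  using kcoef_solves[OF delta_kernel_matrix_injective[OF spd distinct nodes assms(1)] assms(2)]
    delta_kernel_row[OF distinct assms(2)]
  by simp

lemma power_fun_eq_sqrt_error_form:
  assumes "is_rkhs K \<Omega> H ip" "0 \<le> \<mu>" "x \<in> \<Omega>"
  shows "power_fun K H ip xs \<mu> x = sqrt (error_form K xs x (kcoef (delta_kernel K \<mu>) xs (K x)))"
proof -
  interpret rkhs K \<Omega> H ip by (rule rkhs.intro) fact
  show ?thesis
    using SUP_interpolation_error[OF assms(3) nodes strictly_pd_kernel_diag_pos[OF spd assms(3)]
        delta_kernel_matrix_injective[OF spd distinct nodes assms(2)] delta_kernel_sym_on_nodes]
    unfolding power_fun_def reg_interp_def .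
qed

lemma power_fun_delta_eq_sqrt_error_form:
  assumes "is_rkhs (delta_kernel K lam) \<Omega> Hl ipl" "0 \<le> lam" "x \<in> \<Omega>"
  shows "power_fun_delta K Hl ipl xs lam x
    = sqrt (error_form (delta_kernel K lam) xs x (kcoef (delta_kernel K lam) xs (delta_kernel K lam x)))"
proof -
  interpret rkhs "delta_kernel K lam" \<Omega> Hl ipl by (rule rkhs.intro) fact
  have "0 < delta_kernel K lam x x"
    using strictly_pd_kernel_diag_pos[OF spd assms(3)] assms(2) by (simp add: delta_kernel_def)
  then show ?thesis
    using SUP_interpolation_error[OF assms(3) nodes _
        delta_kernel_matrix_injective[OF spd distinct nodes assms(2)] delta_kernel_sym_on_nodes]
    unfolding power_fun_delta_def delta_interp_def by simp
qed

lemma power_fun_at_node_le: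
  assumes "is_rkhs K \<Omega> H ip" "0 \<le> lam" "x \<in> set xs"
  shows "power_fun K H ip xs lam x \<le> sqrt lam"
proof -
  obtain p where p: "p < length xs" "x = xs!p" using assms(3) by (metis in_set_conv_nth)
  have "error_form K xs x (kcoef (delta_kernel K lam) xs (K x)) \<le> lam"
    unfolding p(2) using regularized_kcoef_solves[OF assms(2)] p(1) assms(2)
    by (intro error_form_at_node_le) auto
  then show ?thesis
    using power_fun_eq_sqrt_error_form[OF assms(1,2)] assms(3) nodes by auto
qed

lemma power_fun_0_le:
  assumes "is_rkhs K \<Omega> H ip" "0 \<le> \<mu>" "x \<in> \<Omega>"
  shows "power_fun K H ip xs 0 x \<le> power_fun K H ip xs \<mu> x"
proof -
  have "error_form K xs x (kcoef (delta_kernel K 0) xs (K x))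
      \<le> error_form K xs x (kcoef (delta_kernel K \<mu>) xs (K x))"
  proof (rule error_form_min_at_interpolation_weights)
    show "\<forall>a\<in>set xs. \<forall>b\<in>set xs. K a b = K b a"
      using nodes strictly_pd_kernel_sym[OF spd] by blast
    show "0 \<le> kernel_quad_form K xs c" for c
      by (rule strictly_pd_kernel_quad_form_nonneg[OF spd distinct nodes])
    show "\<forall>i<length xs. (\<Sum>j<length xs. K (xs!i) (xs!j) * kcoef (delta_kernel K 0) xs (K x) j)
        = K x (xs!i)"
      using regularized_kcoef_solves[of 0] by simp
  qed
  then show ?thesis
    using power_fun_eq_sqrt_error_form[OF assms(1) _ assms(3)] assms(2) by simp
qed

lemma power_fun_delta_off_nodes:
  assumes "is_rkhs K \<Omega> H ip" "is_rkhs (delta_kernel K lam) \<Omega> Hl ipl" "0 \<le> lam"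
    and x: "x \<in> \<Omega> - set xs"
  shows "power_fun K H ip xs lam x \<le> power_fun_delta K Hl ipl xs lam x"
    and "sqrt lam \<le> power_fun_delta K Hl ipl xs lam x"
proof -
  let ?u = "kcoef (delta_kernel K lam) xs (K x)"
  have "kcoef (delta_kernel K lam) xs (delta_kernel K lam x) = ?u"
    using x by (intro kcoef_cong) (auto simp: delta_kernel_def)
  then have Q: "power_fun_delta K Hl ipl xs lam x
      = sqrt (error_form K xs x ?u + lam * (1 + (\<Sum>i<length xs. (?u i)\<^sup>2)))"
    using power_fun_delta_eq_sqrt_error_form[OF assms(2,3)] error_form_delta_kernel[OF distinct] x
    by simp
  have "0 \<le> error_form K xs x ?u"
    using rkhs.error_form_nonneg[OF rkhs.intro[OF assms(1)]] x nodes by simp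
  moreover have "0 \<le> lam * (\<Sum>i<length xs. (?u i)\<^sup>2)" using assms(3) by (simp add: sum_nonneg)
  ultimately show "power_fun K H ip xs lam x \<le> power_fun_delta K Hl ipl xs lam x"
    and "sqrt lam \<le> power_fun_delta K Hl ipl xs lam x"
    unfolding Q using power_fun_eq_sqrt_error_form[OF assms(1,3)] assms(3) x
    by (auto simp: distrib_left intro!: real_sqrt_le_mono)
qed

end

theorem proposition3p2:
  fixes K :: "real^'d \<Rightarrow> real^'d \<Rightarrow> real"
    and \<Omega> :: "(real^'d) set"
    and lam :: real
    and xs :: "(real^'d) list"
    and H :: "(real^'d \<Rightarrow> real) set" and ip :: "(real^'d \<Rightarrow> real) \<Rightarrow> (real^'d \<Rightarrow> real) \<Rightarrow> real"
    and Hl :: "(real^'d \<Rightarrow> real) set" and ipl :: "(real^'d \<Rightarrow> real) \<Rightarrow> (real^'d \<Rightarrow> real) \<Rightarrow> real"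
  assumes "strictly_pd_kernel K \<Omega>"
    and "lam > 0"
    and "distinct xs" and "set xs \<subseteq> \<Omega>"
    and "is_rkhs K \<Omega> H ip"
    and "is_rkhs (delta_kernel K lam) \<Omega> Hl ipl"
  shows "(\<forall>x\<in>set xs. power_fun K H ip xs lam x \<le> sqrt lam)
       \<and> (\<forall>x\<in>\<Omega> - set xs. power_fun K H ip xs 0 x \<le> power_fun K H ip xs lam x
                         \<and> power_fun K H ip xs lam x \<le> power_fun_delta K Hl ipl xs lam x)
       \<and> (\<Omega> - set xs \<noteq> {} \<longrightarrow>
            (SUP x\<in>\<Omega>. ereal (power_fun K H ip xs lam x))
              \<le> (SUP x\<in>\<Omega>. ereal (power_fun_delta K Hl ipl xs lam x)))"
proof -
  note kernel_nodes = assms(1,3,4)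
  have "0 \<le> lam" using \<open>lam > 0\<close> by simp
  have at_nodes: "\<forall>x\<in>set xs. power_fun K H ip xs lam x \<le> sqrt lam"
    using power_fun_at_node_le[OF kernel_nodes assms(5) \<open>0 \<le> lam\<close>] by blast
  have off_nodes: "\<forall>x\<in>\<Omega> - set xs. power_fun K H ip xs 0 x \<le> power_fun K H ip xs lam x
      \<and> power_fun K H ip xs lam x \<le> power_fun_delta K Hl ipl xs lam x"
    using power_fun_0_le[OF kernel_nodes assms(5) \<open>0 \<le> lam\<close>]
      power_fun_delta_off_nodes(1)[OF kernel_nodes assms(5,6) \<open>0 \<le> lam\<close>] by blast
  have "(SUP x\<in>\<Omega>. ereal (power_fun K H ip xs lam x))
      \<le> (SUP x\<in>\<Omega>. ereal (power_fun_delta K Hl ipl xs lam x))" if "\<Omega> - set xs \<noteq> {}"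
  proof (rule SUP_mono)
    obtain x0 where x0: "x0 \<in> \<Omega> - set xs" using \<open>\<Omega> - set xs \<noteq> {}\<close> by blast
    text \<open>At a node, compare with any point off the nodes, where \<open>Q \<ge> \<surd>\<lambda>\<close>.\<close>
    have "power_fun K H ip xs lam x \<le> power_fun_delta K Hl ipl xs lam x0" if "x \<in> set xs" for x
      using at_nodes that power_fun_delta_off_nodes(2)[OF kernel_nodes assms(5,6) \<open>0 \<le> lam\<close> x0]
      by fastforce
    with x0 off_nodes show "\<exists>y\<in>\<Omega>. ereal (power_fun K H ip xs lam x)
        \<le> ereal (power_fun_delta K Hl ipl xs lam y)" if "x \<in> \<Omega>" for x
      using that by (cases "x \<in> set xs") auto
  qed
  with at_nodes off_nodes show ?thesis by blast
qed

end
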